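(* Let $\mathcal{T} = \{T_1, \ldots, T_t\}$ be a set of unrooted binary phylogenetic trees on a common leaf set $X$ with $n = |X|$, and let $\mathcal{Q}$ be the set of quartets that are incompatible quartets of $T_1$ and $T_i$ for some $2 \le i \le t$. Then there is a feasible solution $\tilde x$ of the linear program $$\text{minimize } \sum_{e \in E(T_1)} x_e \quad \text{s.t. } \sum_{e \in L(Q)} x_e \ge 1 \ \ \forall Q \in \mathcal{Q}, \qquad x_e \ge 0\ \ \forall e \in E(T_1)$$ with $\sum_{e \in E(T_1)} \tilde x_e = n/4$.
   Context: A (binary) phylogenetic tree on a finite set $X$ is an unrooted tree whose internal vertices have degree 3 and whose leaves are bijectively labelled by $X$. Two phylogenetic trees on $X$ are isomorphic ($\cong$) if there is a graph isomorphism between them fixing every leaf label. For $Y \subseteq X$, $T[Y]$ is the minimal subtree of $T$ connecting the leaves in $Y$, and $T|_Y$ is obtained from $T[Y]$ by suppressing all degree-2 vertices. A quartet is a 4-element subset of $X$; for $Q=\{a,b,c,d\}$, $ab|cd$ is the tree on $Q$ where $a,b$ share a neighbour $u$, $c,d$ share a neighbour $v$, and $u,v$ are adjacent. If $T_1|_Q \cong ab|cd$, $L(Q)$ is the set of edges of $T_1[\{a,b\}] \cup T_1[\{c,d\}]$. $Q$ is an incompatible quartet of $T_1,T_i$ if $T_1|_Q \not\cong T_i|_Q$. *)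

theory Defs
  imports Complex_Main
begin

text \<open>An unrooted phylogenetic tree on X: a tree whose leaves (degree-1 vertices)
  are exactly the elements of X (so leaves are labelled by X via the identity)
  and whose other vertices have degree 3.\<close>

type_synonym 'v graph = "'v set \<times> 'v set set"

definition verts :: "'v graph \<Rightarrow> 'v set" where "verts T = fst T"
definition edges :: "'v graph \<Rightarrow> 'v set set" where "edges T = snd T"

definition is_graph :: "'v graph \<Rightarrow> bool" where
  "is_graph T \<longleftrightarrow> finite (verts T) \<and>
     (\<forall>e\<in>edges T. \<exists>u v. u \<noteq> v \<and> u \<in> verts T \<and> v \<in> verts T \<and> e = {u, v})"

definition degree :: "'v graph \<Rightarrow> 'v \<Rightarrow> nat" where
  "degree T v = card {e \<in> edges T. v \<in> e}"

definition connected_on :: "'v set \<Rightarrow> 'v set set \<Rightarrow> bool" where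
  "connected_on W F \<longleftrightarrow>
     (\<forall>u\<in>W. \<forall>v\<in>W. (u, v) \<in> ({(a, b). {a, b} \<in> F \<and> a \<in> W \<and> b \<in> W})\<^sup>*)"

definition is_tree :: "'v graph \<Rightarrow> bool" where
  "is_tree T \<longleftrightarrow> is_graph T \<and> verts T \<noteq> {} \<and> connected_on (verts T) (edges T)
     \<and> card (edges T) + 1 = card (verts T)"

definition phylo_tree :: "'v set \<Rightarrow> 'v graph \<Rightarrow> bool" where
  "phylo_tree X T \<longleftrightarrow> is_tree T \<and> X \<subseteq> verts T \<and>
     (\<forall>v\<in>verts T. (v \<in> X \<longrightarrow> degree T v = 1) \<and> (v \<notin> X \<longrightarrow> degree T v = 3))"

text \<open>Vertex set of the minimal subtree T[Y] connecting Y: the intersection of the vertex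
  sets of all connected subgraphs of T containing Y.\<close>
definition span_verts :: "'v graph \<Rightarrow> 'v set \<Rightarrow> 'v set" where
  "span_verts T Y = \<Inter> {W. W \<subseteq> verts T \<and> Y \<subseteq> W \<and>
       connected_on W {e \<in> edges T. e \<subseteq> W}}"

definition span_edges :: "'v graph \<Rightarrow> 'v set \<Rightarrow> 'v set set" where
  "span_edges T Y = {e \<in> edges T. e \<subseteq> span_verts T Y}"

text \<open>T|_{a,b,c,d} is isomorphic to ab|cd: the minimal subtrees T[{a,b}] and T[{c,d}]
  are vertex-disjoint.\<close>
definition displays :: "'v graph \<Rightarrow> 'v \<Rightarrow> 'v \<Rightarrow> 'v \<Rightarrow> 'v \<Rightarrow> bool" where
  "displays T a b c d \<longleftrightarrow> span_verts T {a, b} \<inter> span_verts T {c, d} = {}"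

definition quartets :: "'v set \<Rightarrow> 'v set set" where
  "quartets X = {Q. Q \<subseteq> X \<and> card Q = 4}"

definition incompatible :: "'v graph \<Rightarrow> 'v graph \<Rightarrow> 'v set \<Rightarrow> bool" where
  "incompatible T T' Q \<longleftrightarrow>
     \<not> (\<forall>a b c d. {a, b, c, d} = Q \<longrightarrow> (displays T a b c d \<longleftrightarrow> displays T' a b c d))"

definition Lq :: "'v graph \<Rightarrow> 'v \<Rightarrow> 'v \<Rightarrow> 'v \<Rightarrow> 'v \<Rightarrow> 'v set set" where
  "Lq T a b c d = span_edges T {a, b} \<union> span_edges T {c, d}"

end

theory Submission
  imports Defs
begin

text \<open>Give every edge a quarter for each leaf it contains, so only pendant edges carry
  weight. Leaves have degree one, so double counting the incidences
  between edges and leaves gives total weight n/4. For any quartet {a,b,c,d} of leaves, the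
  minimal subtree T[{a,b}] must leave a through its only edge, and likewise for b, c and d;
  hence L(Q) contains the pendant edges of all four leaves and has weight at least 1.\<close>

lemma sum_card_inter_eq_sum_card_incident:
  assumes "finite E" "finite S"
  shows "(\<Sum>e\<in>E. card (e \<inter> S)) = (\<Sum>v\<in>S. card {e\<in>E. v \<in> e})"
proof -
  have "(\<Sum>e\<in>E. card (e \<inter> S)) = (\<Sum>e\<in>E. \<Sum>v\<in>S. if v \<in> e then 1 else 0)"
    using assms(2) by (intro sum.cong) (simp_all add: Int_def sum.inter_filter[symmetric] conj_commute)
  also have "\<dots> = (\<Sum>v\<in>S. \<Sum>e\<in>E. if v \<in> e then 1 else 0)"
    by (rule sum.swap)
  also have "\<dots> = (\<Sum>v\<in>S. card {e\<in>E. v \<in> e})"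
    using assms(1) by (simp add: sum.inter_filter[symmetric])
  finally show ?thesis .
qed

lemma phylo_tree_finite_verts: "phylo_tree X T \<Longrightarrow> finite (verts T)"
  by (simp add: phylo_tree_def is_tree_def is_graph_def)

lemma phylo_tree_finite_edges:
  assumes "phylo_tree X T"
  shows "finite (edges T)"
proof -
  have "edges T \<subseteq> Pow (verts T)"
    using assms by (auto simp: phylo_tree_def is_tree_def is_graph_def)
  then show ?thesis
    using phylo_tree_finite_verts[OF assms] by (meson finite_Pow_iff finite_subset)
qed

lemma phylo_tree_finite_leaves:
  assumes "phylo_tree X T"
  shows "finite X"
proof -
  have "X \<subseteq> verts T"
    using assms by (simp add: phylo_tree_def)
  then show ?thesis
    using phylo_tree_finite_verts[OF assms] by (rule finite_subset)
qed

lemma phylo_tree_leaf_degree: "phylo_tree X T \<Longrightarrow> a \<in> X \<Longrightarrow> degree T a = 1"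
  by (auto simp: phylo_tree_def)

lemma degree_one_edge_in_span_edges:
  assumes "degree T a = 1" "b \<noteq> a"
  shows "\<exists>e\<in>span_edges T {a, b}. a \<in> e"
proof -
  obtain e0 where e0: "{e \<in> edges T. a \<in> e} = {e0}"
    using assms(1) unfolding degree_def by (elim card_1_singletonE)
  have "e0 \<subseteq> W"
    if "{a, b} \<subseteq> W" and conn: "connected_on W {e \<in> edges T. e \<subseteq> W}" for W
  proof -
    let ?R = "{(x, y). {x, y} \<in> {e \<in> edges T. e \<subseteq> W} \<and> x \<in> W \<and> y \<in> W}"
    have "(a, b) \<in> ?R\<^sup>*"
      using conn \<open>{a, b} \<subseteq> W\<close> unfolding connected_on_def by blast
    then obtain w where "(a, w) \<in> ?R"
      using \<open>b \<noteq> a\<close> by (cases rule: converse_rtranclE) auto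
    then have "{a, w} \<in> {e \<in> edges T. a \<in> e}" and "{a, w} \<subseteq> W"
      by auto
    then show ?thesis
      using e0 by blast
  qed
  then have "e0 \<subseteq> span_verts T {a, b}"
    unfolding span_verts_def by blast
  moreover have "e0 \<in> edges T" "a \<in> e0"
    using e0 by blast+
  ultimately show ?thesis
    unfolding span_edges_def by blast
qed

lemma Lq_covers_leaves:
  assumes "phylo_tree X T" "{a, b, c, d} \<subseteq> X" "a \<noteq> b" "c \<noteq> d"
    and "v \<in> {a, b, c, d}"
  shows "\<exists>e\<in>Lq T a b c d. v \<in> e"
proof -
  have leaf_edge: "\<exists>e\<in>span_edges T {x, y}. v \<in> e"
    if "{x, y} \<subseteq> X" "x \<noteq> y" "v \<in> {x, y}" for x y
  proof -
    have "\<exists>e\<in>span_edges T {x, y}. x \<in> e" "\<exists>e\<in>span_edges T {y, x}. y \<in> e"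
      using that by (auto intro!: degree_one_edge_in_span_edges phylo_tree_leaf_degree[OF assms(1)])
    then show ?thesis
      using that(3) by (auto simp: insert_commute)
  qed
  show ?thesis
    using assms(2-5) leaf_edge[of a b] leaf_edge[of c d] unfolding Lq_def by blast
qed

lemma card_four_distinct:
  assumes "card {a, b, c, d} = 4"
  shows "a \<noteq> b" "c \<noteq> d"
proof -
  have le3: "card {x, y, z} \<le> 3" for x y z :: 'a
    using card_insert_le_m1[of _ "{y, z}" x] card_insert_le_m1[of _ "{z}" y] by simp
  show "a \<noteq> b"
    using assms le3[of a c d] by (cases "a = b") simp_all
  show "c \<noteq> d"
    using assms le3[of a b c] by (cases "c = d") simp_all
qed

definition pendant_weight :: "'v set \<Rightarrow> 'v set \<Rightarrow> real" where
  "pendant_weight X e = real (card (e \<inter> X)) / 4"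

lemma sum_pendant_weight:
  assumes "phylo_tree X T"
  shows "(\<Sum>e\<in>edges T. pendant_weight X e) = real (card X) / 4"
proof -
  have "(\<Sum>e\<in>edges T. card (e \<inter> X)) = (\<Sum>v\<in>X. degree T v)"
    unfolding degree_def using assms
    by (intro sum_card_inter_eq_sum_card_incident phylo_tree_finite_edges phylo_tree_finite_leaves)
  also have "\<dots> = card X"
    using phylo_tree_leaf_degree[OF assms] by simp
  finally show ?thesis
    unfolding pendant_weight_def
    by (simp add: sum_divide_distrib[symmetric] flip: of_nat_sum)
qed

lemma sum_pendant_weight_Lq_ge_1:
  assumes "phylo_tree X T" "{a, b, c, d} \<in> quartets X"
  shows "(\<Sum>e\<in>Lq T a b c d. pendant_weight X e) \<ge> 1"
proof -
  let ?Q = "{a, b, c, d}" and ?L = "Lq T a b c d"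
  have QX: "?Q \<subseteq> X" and card_Q: "card ?Q = 4"
    using assms(2) by (auto simp: quartets_def)
  have "finite ?L"
    using phylo_tree_finite_edges[OF assms(1)]
    by (rule finite_subset[rotated]) (auto simp: Lq_def span_edges_def)
  have "?Q = (\<Union>e\<in>?L. e \<inter> ?Q)"
    using Lq_covers_leaves[OF assms(1) QX card_four_distinct[OF card_Q]] by blast
  then have "4 \<le> (\<Sum>e\<in>?L. card (e \<inter> ?Q))"
    using card_UN_le[OF \<open>finite ?L\<close>, of "\<lambda>e. e \<inter> ?Q"] card_Q by simp
  also have "\<dots> \<le> (\<Sum>e\<in>?L. card (e \<inter> X))"
    using QX phylo_tree_finite_leaves[OF assms(1)] by (intro sum_mono card_mono) auto
  finally have "(4::real) \<le> (\<Sum>e\<in>?L. real (card (e \<inter> X)))"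
    by (simp flip: of_nat_sum)
  then show ?thesis
    unfolding pendant_weight_def by (simp add: sum_divide_distrib[symmetric])
qed

theorem lemma7:
  fixes X :: "'v set" and t :: nat and T :: "nat \<Rightarrow> 'v graph"
  assumes "t \<ge> 1"
    and "\<forall>i\<in>{1..t}. phylo_tree X (T i)"
  defines "QQ \<equiv> {Q \<in> quartets X. \<exists>i\<in>{2..t}. incompatible (T 1) (T i) Q}"
  shows "\<exists>x :: 'v set \<Rightarrow> real.
           (\<forall>e\<in>edges (T 1). x e \<ge> 0)
         \<and> (\<forall>a b c d. {a, b, c, d} \<in> QQ \<and> displays (T 1) a b c d
               \<longrightarrow> (\<Sum>e\<in>Lq (T 1) a b c d. x e) \<ge> 1)
         \<and> (\<Sum>e\<in>edges (T 1). x e) = real (card X) / 4"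
proof (intro exI conjI)
  have T1: "phylo_tree X (T 1)"
    using assms(1,2) by auto
  show "\<forall>e\<in>edges (T 1). pendant_weight X e \<ge> 0"
    by (simp add: pendant_weight_def)
  show "\<forall>a b c d. {a, b, c, d} \<in> QQ \<and> displays (T 1) a b c d
          \<longrightarrow> (\<Sum>e\<in>Lq (T 1) a b c d. pendant_weight X e) \<ge> 1"
    using sum_pendant_weight_Lq_ge_1[OF T1] by (simp add: QQ_def)
  show "(\<Sum>e\<in>edges (T 1). pendant_weight X e) = real (card X) / 4"
    using sum_pendant_weight[OF T1] .
qed

end
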